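(* Suppose $0<\delta<2$ and $U,\tilde U\in C^1(-1,-1+\delta]\cap C^0[-1,-1+\delta]$ satisfy $$(1-x^2)U'+2xU+\tfrac12U^2\ge(1-x^2)\tilde U'+2x\tilde U+\tfrac12\tilde U^2,\quad -1<x<-1+\delta.$$ Suppose also that one of the following holds: (i) $U(-1)\ge\tilde U(-1)>2$; (ii) $U(-1)=\tilde U(-1)=2$ and $\limsup_{x\to-1^+}\int_{-1+\delta}^x\frac{-2+U(s)}{1-s^2}\,ds<+\infty$. Then either $U>\tilde U$ in $(-1,-1+\delta)$, or there exists $\delta'\in(0,\delta)$ such that $U\equiv\tilde U$ in $(-1,-1+\delta')$. *)

theory Defs
  imports "HOL-Analysis.Analysis"
begin

definition C1_on :: "real set \<Rightarrow> (real \<Rightarrow> real) \<Rightarrow> bool" where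
  "C1_on S f \<longleftrightarrow> (\<exists>f'. (\<forall>x\<in>S. (f has_real_derivative f' x) (at x within S)) \<and> continuous_on S f')"

end

theory Submission imports Defs begin

text \<open>For \<open>w = U - Ut\<close>, subtracting the two Riccati inequalities gives the linear inequality
  \<open>w' + a w \<ge> 0\<close> with \<open>a = (2x + (U + Ut)/2) / (1 - x\<^sup>2)\<close>, so with the integrating factor
  \<open>F(y) = \<integral>\<^sub>y\<^sup>b a\<close> the function \<open>exp(-F) w\<close> is nondecreasing. Thus a zero of \<open>w\<close> forces
  \<open>w \<le> 0\<close> to its left, and \<open>w(x) < 0\<close> gives \<open>w(y) \<le> exp (F y - F x) w(x)\<close> for \<open>y \<le> x\<close>, which
  contradicts \<open>w(-1) \<ge> 0\<close> as soon as \<open>F\<close> is bounded below near \<open>-1\<close>. In case (i) \<open>a > 0\<close>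
  near \<open>-1\<close>; in case (ii), where \<open>w < 0\<close>, one has \<open>a \<ge> (-2 + U)/(1 - x\<^sup>2)\<close>, whose integral
  is bounded below by the limsup hypothesis.\<close>

lemma C1_on_has_real_derivative_interior:
  assumes "C1_on S f" "x \<in> interior S"
  shows "(f has_real_derivative deriv f x) (at x)"
proof -
  obtain f' where "\<forall>x\<in>S. (f has_real_derivative f' x) (at x within S)"
    using assms(1) unfolding C1_on_def by blast
  then have "(f has_real_derivative f' x) (at x)"
    using assms(2) interior_subset at_within_interior by fastforce
  then show ?thesis
    using DERIV_imp_deriv by fastforce
qed

lemma has_real_derivative_integral_lower_limit:
  fixes f :: "real \<Rightarrow> real"
  assumes "continuous_on {l<..b} f" "l < x" "x < b"
  shows "((\<lambda>y. integral {y..b} f) has_real_derivative - f x) (at x)"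
proof -
  define c where "c = (l + x) / 2"
  have "continuous_on {c..b} f"
    using assms by (intro continuous_on_subset[OF assms(1)]) (auto simp: c_def)
  then have "((\<lambda>y. integral {y..b} f) has_real_derivative - f x) (at x within {c..b})"
    using assms by (intro integral_has_real_derivative') (auto simp: c_def)
  moreover have "at x within {c..b} = at x"
    using assms by (intro at_within_Icc_at) (auto simp: c_def)
  ultimately show ?thesis by simp
qed

lemma integral_lower_limit_diff_mono:
  fixes f g :: "real \<Rightarrow> real"
  assumes "continuous_on {l<..b} f" "continuous_on {l<..b} g"
    and "l < y" "y \<le> x" "x \<le> b" "\<forall>z\<in>{y..x}. g z \<le> f z"
  shows "integral {x..b} f - integral {x..b} g \<le> integral {y..b} f - integral {y..b} g"
proof -
  have "continuous_on {y..b} f" "continuous_on {y..b} g"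
    using assms by (auto intro: continuous_on_subset)
  then have "f integrable_on {y..b}" "g integrable_on {y..b}"
    by (auto intro: integrable_continuous_interval)
  note split = Henstock_Kurzweil_Integration.integral_combine[OF assms(4,5), symmetric]
  have "integral {y..b} f = integral {y..x} f + integral {x..b} f"
    "integral {y..b} g = integral {y..x} g + integral {x..b} g"
    by (rule split, fact)+
  moreover have "integral {y..x} g \<le> integral {y..x} f"
    using \<open>f integrable_on {y..b}\<close> \<open>g integrable_on {y..b}\<close> assms(4,5,6)
    by (intro integral_le) (auto intro: integrable_on_subinterval)
  ultimately show ?thesis by simp
qed

lemma integral_lower_limit_eventually_ge:
  fixes f g :: "real \<Rightarrow> real"
  assumes "continuous_on {l<..b} f" "continuous_on {l<..b} g"
    and "l < x" "x \<le> b" "\<forall>z\<in>{l<..x}. g z \<le> f z"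
    and "eventually (\<lambda>y. M \<le> integral {y..b} g) (at_right l)"
  shows "eventually (\<lambda>y. integral {x..b} f - integral {x..b} g + M \<le> integral {y..b} f)
           (at_right l)"
proof -
  have "eventually (\<lambda>y. y < x) (at_right l)"
    using assms(3) eventually_at_right_field by blast
  with assms(6) eventually_at_right_less[of l] show ?thesis
  proof eventually_elim
    case (elim y)
    then show ?case
      using integral_lower_limit_diff_mono[OF assms(1,2), of y x] assms(3-5) by fastforce
  qed
qed

lemma linear_differential_inequality_backward:
  fixes a w w' :: "real \<Rightarrow> real"
  assumes a: "continuous_on {l<..b} a"
    and w: "\<And>z. l < z \<Longrightarrow> z < b \<Longrightarrow> (w has_real_derivative w' z) (at z)"
    and ineq: "\<And>z. l < z \<Longrightarrow> z < b \<Longrightarrow> 0 \<le> w' z + a z * w z"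
    and "l < y" "y \<le> x" "x < b"
  shows "w y \<le> exp (integral {y..b} a - integral {x..b} a) * w x"
proof -
  define F where "F z = integral {z..b} a" for z
  define E where "E z = exp (- F z) * w z" for z
  have "E y \<le> E x"
    using \<open>y \<le> x\<close>
  proof (rule DERIV_nonneg_imp_nondecreasing)
    fix z assume "y \<le> z" "z \<le> x"
    then have z: "l < z" "z < b" using assms by auto
    have "((\<lambda>z. exp (- F z)) has_real_derivative exp (- F z) * a z) (at z)"
      using DERIV_chain2[OF DERIV_exp DERIV_minus[OF has_real_derivative_integral_lower_limit[OF a z]]]
      by (simp add: F_def)
    from DERIV_mult[OF this w[OF z]]
    have "(E has_real_derivative exp (- F z) * (w' z + a z * w z)) (at z)"
      by (simp add: E_def[abs_def] algebra_simps)
    then show "\<exists>d. (E has_real_derivative d) (at z) \<and> 0 \<le> d"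
      using ineq[OF z] by auto
  qed
  then have "exp (F y) * E y \<le> exp (F y) * E x" by simp
  then show ?thesis
    by (simp add: E_def F_def exp_minus exp_diff field_simps)
qed

lemma linear_differential_inequality_negative_limit:
  fixes a w w' :: "real \<Rightarrow> real"
  assumes a: "continuous_on {l<..b} a"
    and w: "\<And>z. l < z \<Longrightarrow> z < b \<Longrightarrow> (w has_real_derivative w' z) (at z)"
    and ineq: "\<And>z. l < z \<Longrightarrow> z < b \<Longrightarrow> 0 \<le> w' z + a z * w z"
    and lim: "(w \<longlongrightarrow> w0) (at_right l)"
    and "l < x" "x < b" "w x < 0"
    and K: "eventually (\<lambda>y. K \<le> integral {y..b} a) (at_right l)"
  shows "w0 < 0"
proof -
  have "eventually (\<lambda>y. y < x) (at_right l)"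
    using \<open>l < x\<close> eventually_at_right_field by blast
  with K eventually_at_right_less[of l]
  have "eventually (\<lambda>y. w y \<le> exp (K - integral {x..b} a) * w x) (at_right l)"
  proof eventually_elim
    case (elim y)
    have "w y \<le> exp (integral {y..b} a - integral {x..b} a) * w x"
      using elim assms by (intro linear_differential_inequality_backward[OF a w ineq]) auto
    also have "\<dots> \<le> exp (K - integral {x..b} a) * w x"
      using elim \<open>w x < 0\<close> by (simp add: mult_right_mono_neg)
    finally show ?case .
  qed
  then have "w0 \<le> exp (K - integral {x..b} a) * w x"
    using tendsto_upperbound[OF lim] by simp
  also have "\<dots> < 0" using \<open>w x < 0\<close> by (simp add: mult_pos_neg)
  finally show ?thesis .
qed

lemma riccati_difference_linear:
  fixes x u v u' v' :: real
  assumes "0 < 1 - x\<^sup>2"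
    and "(1 - x\<^sup>2) * v' + 2 * x * v + v\<^sup>2 / 2 \<le> (1 - x\<^sup>2) * u' + 2 * x * u + u\<^sup>2 / 2"
  shows "0 \<le> (u' - v') + (2 * x + (u + v) / 2) / (1 - x\<^sup>2) * (u - v)"
proof -
  let ?d = "(u' - v') + (2 * x + (u + v) / 2) / (1 - x\<^sup>2) * (u - v)"
  have "(1 - x\<^sup>2) * ?d
      = ((1 - x\<^sup>2) * u' + 2 * x * u + u\<^sup>2 / 2) - ((1 - x\<^sup>2) * v' + 2 * x * v + v\<^sup>2 / 2)"
    using assms(1) by (simp add: field_simps power2_eq_square)
  then have "0 \<le> (1 - x\<^sup>2) * ?d"
    using assms(2) by linarith
  then show ?thesis
    using assms(1) by (metis mult_pos_neg not_le)
qed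

lemma integral_lower_limit_bounded_below_if_eventually_nonneg:
  fixes f :: "real \<Rightarrow> real"
  assumes "continuous_on {l<..b} f" "l < b" "eventually (\<lambda>x. 0 \<le> f x) (at_right l)"
  shows "\<exists>K. eventually (\<lambda>y. K \<le> integral {y..b} f) (at_right l)"
proof -
  obtain c where "l < c" and c: "\<And>z. l < z \<Longrightarrow> z < c \<Longrightarrow> 0 \<le> f z"
    using assms(3) unfolding eventually_at_right_field by blast
  define x where "x = min ((l + c) / 2) b"
  have "l < x" "x \<le> b" "\<forall>z\<in>{l<..x}. 0 \<le> f z"
    using \<open>l < c\<close> assms(2) c by (auto simp: x_def)
  from integral_lower_limit_eventually_ge[OF assms(1) continuous_on_const this, of 0]
  show ?thesis by auto
qed

text \<open>The difference is the oriented integral \<open>\<integral>\<^sub>b\<^sup>x h\<close>; the first term vanishes for \<open>x < b\<close>.\<close>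

lemma integral_lower_limit_bounded_below_if_Limsup:
  fixes h :: "real \<Rightarrow> real"
  assumes "Limsup (at_right l) (\<lambda>x. ereal (integral {b..x} h - integral {x..b} h)) < \<infinity>"
    and "l < b"
  shows "\<exists>M. eventually (\<lambda>y. M \<le> integral {y..b} h) (at_right l)"
proof -
  obtain M where "Limsup (at_right l) (\<lambda>x. ereal (integral {b..x} h - integral {x..b} h)) < ereal M"
    using ereal_dense2[OF assms(1)] by blast
  from Limsup_lessD[OF this]
  have "eventually (\<lambda>x. integral {b..x} h - integral {x..b} h < M) (at_right l)" by simp
  moreover have "eventually (\<lambda>x. x < b) (at_right l)"
    using assms(2) eventually_at_right_field by blast
  ultimately have "eventually (\<lambda>y. - M \<le> integral {y..b} h) (at_right l)"
    by eventually_elim simp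
  then show ?thesis by blast
qed

locale riccati_comparison =
  fixes b :: real and U Ut :: "real \<Rightarrow> real"
  assumes b: "-1 < b" "b < 1"
    and U: "C1_on {-1<..b} U" "continuous_on {-1..b} U"
    and Ut: "C1_on {-1<..b} Ut" "continuous_on {-1..b} Ut"
    and riccati_ge: "\<And>x. -1 < x \<Longrightarrow> x < b \<Longrightarrow>
      (1 - x\<^sup>2) * deriv Ut x + 2 * x * Ut x + (Ut x)\<^sup>2 / 2
        \<le> (1 - x\<^sup>2) * deriv U x + 2 * x * U x + (U x)\<^sup>2 / 2"
begin

definition gap :: "real \<Rightarrow> real" where
  "gap x = U x - Ut x"

definition coeff :: "real \<Rightarrow> real" where
  "coeff x = (2 * x + (U x + Ut x) / 2) / (1 - x\<^sup>2)"

lemma one_minus_square_pos: "-1 < x \<Longrightarrow> x \<le> b \<Longrightarrow> 0 < 1 - x\<^sup>2"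
  using b abs_square_less_1[of x] by auto

lemma one_minus_square_nonzero: "\<forall>x\<in>{-1<..b}. 1 - x\<^sup>2 \<noteq> 0"
  using one_minus_square_pos by (metis greaterThanAtMost_iff less_irrefl)

lemma continuous_on_U: "continuous_on {-1<..b} U"
  and continuous_on_Ut: "continuous_on {-1<..b} Ut"
  using U(2) Ut(2) by (auto intro: continuous_on_subset)

lemma continuous_on_coeff: "continuous_on {-1<..b} coeff"
  unfolding coeff_def[abs_def]
  by (intro continuous_intros continuous_on_U continuous_on_Ut one_minus_square_nonzero) auto

lemma gap_has_real_derivative:
  "-1 < x \<Longrightarrow> x < b \<Longrightarrow> (gap has_real_derivative deriv U x - deriv Ut x) (at x)"
  unfolding gap_def[abs_def]
  by (intro DERIV_diff C1_on_has_real_derivative_interior[OF U(1)]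
      C1_on_has_real_derivative_interior[OF Ut(1)]) auto

lemma gap_linear_inequality:
  "-1 < x \<Longrightarrow> x < b \<Longrightarrow> 0 \<le> (deriv U x - deriv Ut x) + coeff x * gap x"
  unfolding coeff_def gap_def
  by (intro riccati_difference_linear riccati_ge one_minus_square_pos) auto

lemma gap_backward_bound:
  "-1 < y \<Longrightarrow> y \<le> x \<Longrightarrow> x < b \<Longrightarrow>
    gap y \<le> exp (integral {y..b} coeff - integral {x..b} coeff) * gap x"
  by (rule linear_differential_inequality_backward[OF continuous_on_coeff
        gap_has_real_derivative gap_linear_inequality])

lemma gap_negative_at_endpoint:
  assumes "-1 < x" "x < b" "gap x < 0"
    and "eventually (\<lambda>y. K \<le> integral {y..b} coeff) (at_right (-1))"
  shows "gap (-1) < 0"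
proof (rule linear_differential_inequality_negative_limit[OF continuous_on_coeff
      gap_has_real_derivative gap_linear_inequality _ assms])
  have "continuous_on {-1..b} gap"
    unfolding gap_def[abs_def] using U(2) Ut(2) by (intro continuous_intros)
  then show "(gap \<longlongrightarrow> gap (-1)) (at_right (-1))"
    by (rule continuous_on_Icc_at_rightD[OF _ b(1)])
qed

lemma gap_nonneg_supercritical:
  assumes "Ut (-1) \<le> U (-1)" "4 < U (-1) + Ut (-1)" "-1 < x" "x < b"
  shows "0 \<le> gap x"
proof (rule ccontr)
  assume "\<not> 0 \<le> gap x"
  define N where "N x = 2 * x + (U x + Ut x) / 2" for x
  have "continuous_on {-1..b} N"
    unfolding N_def[abs_def] using U(2) Ut(2) by (intro continuous_intros) auto
  then have "(N \<longlongrightarrow> N (-1)) (at_right (-1))"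
    by (rule continuous_on_Icc_at_rightD[OF _ b(1)])
  moreover have "0 < N (-1)" using assms(2) by (simp add: N_def)
  ultimately have "eventually (\<lambda>y. 0 < N y) (at_right (-1))"
    by (rule order_tendstoD)
  moreover have "eventually (\<lambda>y. y < b) (at_right (-1))"
    using b(1) eventually_at_right_field by blast
  ultimately have "eventually (\<lambda>y. 0 \<le> coeff y) (at_right (-1))"
    using eventually_at_right_less
  proof eventually_elim
    case (elim y)
    then show ?case
      using b one_minus_square_pos[of y] by (simp add: coeff_def N_def)
  qed
  then obtain K where "eventually (\<lambda>y. K \<le> integral {y..b} coeff) (at_right (-1))"
    using integral_lower_limit_bounded_below_if_eventually_nonneg[OF continuous_on_coeff b(1)]
    by blast
  then have "gap (-1) < 0"
    using gap_negative_at_endpoint assms(3,4) \<open>\<not> 0 \<le> gap x\<close> by force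
  then show False using assms(1) by (simp add: gap_def)
qed

lemma gap_nonneg_critical:
  assumes "U (-1) = 2" "Ut (-1) = 2"
    and "Limsup (at_right (-1)) (\<lambda>x. ereal (integral {b..x} (\<lambda>s. (-2 + U s) / (1 - s\<^sup>2))
                                    - integral {x..b} (\<lambda>s. (-2 + U s) / (1 - s\<^sup>2)))) < \<infinity>"
    and "-1 < x" "x < b"
  shows "0 \<le> gap x"
proof (rule ccontr)
  assume "\<not> 0 \<le> gap x"
  then have neg: "gap y < 0" if "-1 < y" "y \<le> x" for y
    using gap_backward_bound[of y x] that assms(5) mult_pos_neg[of _ "gap x"]
    by (smt (verit, best) exp_gt_zero)
  have "(-2 + U z) / (1 - z\<^sup>2) \<le> coeff z" if "z \<in> {-1<..x}" for z
  proof -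
    have "U z < Ut z" "-1 < z"
      using that neg[of z] by (auto simp: gap_def)
    then have "-2 + U z \<le> 2 * z + (U z + Ut z) / 2" by (simp add: field_simps)
    then show ?thesis
      using that one_minus_square_pos[of z] assms(5) by (simp add: coeff_def divide_right_mono)
  qed
  moreover have "continuous_on {-1<..b} (\<lambda>s. (-2 + U s) / (1 - s\<^sup>2))"
    by (intro continuous_intros continuous_on_U one_minus_square_nonzero)
  moreover obtain M where "eventually (\<lambda>y. M \<le> integral {y..b} (\<lambda>s. (-2 + U s) / (1 - s\<^sup>2)))
      (at_right (-1))"
    using integral_lower_limit_bounded_below_if_Limsup[OF assms(3) b(1)] by blast
  ultimately have "eventually (\<lambda>y. integral {x..b} coeff
      - integral {x..b} (\<lambda>s. (-2 + U s) / (1 - s\<^sup>2)) + M \<le> integral {y..b} coeff) (at_right (-1))"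
    using assms(4,5) by (intro integral_lower_limit_eventually_ge[OF continuous_on_coeff]) auto
  then have "gap (-1) < 0"
    using gap_negative_at_endpoint assms(4,5) \<open>\<not> 0 \<le> gap x\<close> by force
  then show False using assms(1,2) by (simp add: gap_def)
qed

lemma gap_zero_propagates_left:
  assumes "\<And>y. -1 < y \<Longrightarrow> y < b \<Longrightarrow> 0 \<le> gap y" "-1 < x" "x < b" "gap x = 0"
    and "-1 < y" "y \<le> x"
  shows "U y = Ut y"
  using gap_backward_bound[of y x] assms by (fastforce simp: gap_def)

end

theorem lemma2p4:
  fixes \<delta> :: real and U Ut :: "real \<Rightarrow> real"
  assumes "0 < \<delta>" "\<delta> < 2"
    and "C1_on {-1<..-1+\<delta>} U" "continuous_on {-1..-1+\<delta>} U"
    and "C1_on {-1<..-1+\<delta>} Ut" "continuous_on {-1..-1+\<delta>} Ut"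
    and "\<forall>x\<in>{-1<..<-1+\<delta>}.
           (1 - x^2) * deriv U x + 2 * x * U x + U x ^ 2 / 2
           \<ge> (1 - x^2) * deriv Ut x + 2 * x * Ut x + Ut x ^ 2 / 2"
    and "(U (-1) \<ge> Ut (-1) \<and> Ut (-1) > 2) \<or>
         (U (-1) = 2 \<and> Ut (-1) = 2 \<and>
          Limsup (at_right (-1))
            (\<lambda>x. ereal (integral {-1+\<delta>..x} (\<lambda>s. (-2 + U s) / (1 - s^2))
                        - integral {x..-1+\<delta>} (\<lambda>s. (-2 + U s) / (1 - s^2)))) < \<infinity>)"
  shows "(\<forall>x\<in>{-1<..<-1+\<delta>}. U x > Ut x) \<or>
         (\<exists>\<delta>'. 0 < \<delta>' \<and> \<delta>' < \<delta> \<and> (\<forall>x\<in>{-1<..<-1+\<delta>'}. U x = Ut x))"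
proof -
  interpret riccati_comparison "-1 + \<delta>" U Ut
    using assms(1-7) by unfold_locales auto
  have nonneg: "0 \<le> gap x" if "-1 < x" "x < -1 + \<delta>" for x
    using assms(8) gap_nonneg_supercritical[OF _ _ that] gap_nonneg_critical[OF _ _ _ that]
    by force
  show ?thesis
  proof (cases "\<forall>x\<in>{-1<..<-1+\<delta>}. U x > Ut x")
    case False
    then obtain x where x: "-1 < x" "x < -1 + \<delta>" "gap x = 0"
      using nonneg by (force simp: gap_def)
    then have "\<forall>y\<in>{-1<..<-1 + (x + 1)}. U y = Ut y"
      using gap_zero_propagates_left[OF nonneg] by auto
    with x show ?thesis by (intro disjI2 exI[of _ "x + 1"]) auto
  qed blast
qed

end
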